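(* Let $\mathcal U$ be a finite nonempty set, let $\epsilon_1,\epsilon_2\in(0,1]$ and let $F_a,F_b\ge1$ be integers. For $p\in[\max\{\epsilon_1,\epsilon_2\},1]$ and nonnegative integer vectors $a=(a_v)_{v\in\mathcal U}$, $b=(b_v)_{v\in\mathcal U}$, let $$V(p;a,b)=\Big(\frac1p-1\Big)\gamma_{2,2}+\Big(\frac1{\epsilon_2}-\frac1p\Big)\gamma_{2,1}+\Big(\frac1{\epsilon_1}-\frac1p\Big)\gamma_{1,2}+\Big(\frac{p}{\epsilon_1\epsilon_2}-\frac1{\epsilon_1}-\frac1{\epsilon_2}+\frac1p\Big)\gamma_{1,1},\quad \gamma_{i,j}=\sum_v a_v^ib_v^j,$$ which is the variance of the COUNT join estimator under UBS parameters $(p,\epsilon_1/p)$ and $(p,\epsilon_2/p)$. Then the value of $p\in[\max\{\epsilon_1,\epsilon_2\},1]$ minimizing the worst-case variance $\max\{V(p;a,b): 0\le a_v\le F_a,\ 0\le b_v\le F_b \text{ for all } v\}$ is $$p=\min\Big\{1,\max\Big\{\epsilon_1,\epsilon_2,\sqrt{\epsilon_1\epsilon_2(F_aF_b-F_a-F_b+1)}\Big\}\Big\},$$ with corresponding uniform sampling rates $q_1=\epsilon_1/p$, $q_2=\epsilon_2/p$.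
   Context: Setting: two tables $T_1,T_2$ joined on a column $J$ with values in $\mathcal U$ are held by different parties; $a_v$, $b_v$ are the numbers of tuples of $T_1$, $T_2$ with $J$-value $v$, and the only information about the frequency vectors used is the maximum frequencies $F_a=\max_v a_v$ and $F_b=\max_v b_v$. Both tables use universe-Bernoulli sampling with the same universe rate $p$ (each tuple whose hashed join value is below $p$ is kept independently with probability $q_i$), with effective sampling rates $pq_i=\epsilon_i$; the COUNT estimator is $|S_1\bowtie S_2|/(pq_1q_2)$, whose variance equals $V(p;a,b)$ above. *)

theory Defs
  imports Complex_Main
begin

definition gamma :: "'a set \<Rightarrow> ('a \<Rightarrow> nat) \<Rightarrow> ('a \<Rightarrow> nat) \<Rightarrow> nat \<Rightarrow> nat \<Rightarrow> real" where
  "gamma U a b i j = (\<Sum>v\<in>U. real (a v) ^ i * real (b v) ^ j)"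

definition join_var :: "'a set \<Rightarrow> real \<Rightarrow> real \<Rightarrow> real \<Rightarrow> ('a \<Rightarrow> nat) \<Rightarrow> ('a \<Rightarrow> nat) \<Rightarrow> real" where
  "join_var U e1 e2 p a b =
     (1/p - 1) * gamma U a b 2 2
   + (1/e2 - 1/p) * gamma U a b 2 1
   + (1/e1 - 1/p) * gamma U a b 1 2
   + (p/(e1*e2) - 1/e1 - 1/e2 + 1/p) * gamma U a b 1 1"

definition worst_var :: "'a set \<Rightarrow> real \<Rightarrow> real \<Rightarrow> nat \<Rightarrow> nat \<Rightarrow> real \<Rightarrow> real" where
  "worst_var U e1 e2 Fa Fb p =
     Max {join_var U e1 e2 p a b | a b. \<forall>v\<in>U. a v \<le> Fa \<and> b v \<le> Fb}"

end

theory Submission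
  imports Defs "HOL-Library.FuncSet"
begin

text \<open>For p between the target rates and 1 every coefficient of the variance is nonnegative, so the
  worst case is attained by the constant vectors a = Fa, b = Fb.  There the variance equals
  |U| Fa Fb (K/p + p/E) plus a term independent of p, where K = (Fa - 1)(Fb - 1) and
  E = e1 e2.  The convex function K/p + p/E has its unconstrained minimum at sqrt(K E), so
  clamping sqrt(K E) to the feasible interval gives the unique optimum.\<close>

lemma gamma_mono:
  assumes "\<forall>v\<in>U. a v \<le> a' v \<and> b v \<le> b' v"
  shows "gamma U a b i j \<le> gamma U a' b' i j"
  unfolding gamma_def using assms by (intro sum_mono mult_mono power_mono) auto

lemma gamma_restrict: "gamma U (restrict a U) (restrict b U) i j = gamma U a b i j"
  by (simp add: gamma_def)

lemma join_var_mono: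
  assumes "0 < e1" "0 < e2" "max e1 e2 \<le> p" "p \<le> 1"
    and "\<forall>v\<in>U. a v \<le> a' v \<and> b v \<le> b' v"
  shows "join_var U e1 e2 p a b \<le> join_var U e1 e2 p a' b'"
proof -
  have "p > 0" using assms by linarith
  have c22: "1/p - 1 \<ge> 0" and c21: "1/e2 - 1/p \<ge> 0" and c12: "1/e1 - 1/p \<ge> 0"
    using assms \<open>p > 0\<close> by (simp_all add: frac_le)
  have "p/(e1*e2) - 1/e1 - 1/e2 + 1/p = (p - e1) * (p - e2) / (p * e1 * e2)"
    using assms \<open>p > 0\<close> by (simp add: field_simps)
  also have "\<dots> \<ge> 0" using assms \<open>p > 0\<close> by simp
  finally have c11: "p/(e1*e2) - 1/e1 - 1/e2 + 1/p \<ge> 0" .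
  show ?thesis
    unfolding join_var_def
    by (intro add_mono mult_left_mono gamma_mono assms(5) c22 c21 c12 c11)
qed

lemma finite_bounded_join_vars:
  assumes "finite U"
  shows "finite {join_var U e1 e2 p a b | a b. \<forall>v\<in>U. a v \<le> Fa \<and> b v \<le> Fb}"
proof -
  let ?A = "PiE U (\<lambda>_. {..Fa}) \<times> PiE U (\<lambda>_. {..Fb})"
  have "{join_var U e1 e2 p a b | a b. \<forall>v\<in>U. a v \<le> Fa \<and> b v \<le> Fb}
      \<subseteq> (\<lambda>(a, b). join_var U e1 e2 p a b) ` ?A"
  proof clarify
    fix a b assume "\<forall>v\<in>U. a v \<le> Fa \<and> b v \<le> Fb"
    then have "(restrict a U, restrict b U) \<in> ?A" by auto
    moreover have "join_var U e1 e2 p a b = join_var U e1 e2 p (restrict a U) (restrict b U)"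
      by (simp add: join_var_def gamma_restrict)
    ultimately show "join_var U e1 e2 p a b \<in> (\<lambda>(a, b). join_var U e1 e2 p a b) ` ?A"
      by force
  qed
  moreover have "finite ?A" using assms by (simp add: finite_PiE)
  ultimately show ?thesis by (meson finite_imageI finite_subset)
qed

lemma worst_var_eq_join_var_const:
  assumes "finite U" "0 < e1" "0 < e2" "max e1 e2 \<le> p" "p \<le> 1"
  shows "worst_var U e1 e2 Fa Fb p = join_var U e1 e2 p (\<lambda>_. Fa) (\<lambda>_. Fb)"
  unfolding worst_var_def
  by (rule Max_eqI[OF finite_bounded_join_vars[OF assms(1)]])
     (use join_var_mono[OF assms(2-5)] in auto)

lemma join_var_const:
  assumes "p \<noteq> 0"
  shows "join_var U e1 e2 p (\<lambda>_. Fa) (\<lambda>_. Fb) =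
      card U * Fa * Fb * ((Fa - 1) * (Fb - 1) / p + p / (e1 * e2))
    + card U * Fa * Fb * (Fa / e2 + Fb / e1 - Fa * Fb - 1/e1 - 1/e2)"
  using assms by (simp add: join_var_def gamma_def field_simps power2_eq_square)

lemma clamped_sqrt_sign:
  fixes l u K E p s :: real
  assumes "0 < l" "l \<le> u" "0 \<le> K" "0 < E"
    and s: "s = min u (max l (sqrt (K * E)))"
    and "p \<in> {l..u}" "p \<noteq> s"
  shows "(p - s) * (p * s - K * E) > 0"
proof -
  define r where "r = sqrt (K * E)"
  have "r \<ge> 0" and r2: "r * r = K * E" using assms by (auto simp: r_def)
  consider "r \<le> l" | "l < r" "r \<le> u" | "u < r" by linarith
  then show ?thesis
  proof cases
    case 1
    then have "s = l" "p > l" using assms by (auto simp: r_def)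
    moreover have "r * r \<le> l * l" using 1 \<open>r \<ge> 0\<close> by (simp add: mult_mono)
    moreover have "p * l > l * l" using \<open>p > l\<close> assms by simp
    ultimately show ?thesis using r2 by simp
  next
    case 2
    then have "s = r" "r > 0" using s \<open>0 < l\<close> by (auto simp: r_def simp del: real_sqrt_gt_0_iff)
    then have "(p - s) * (p * s - K * E) = r * (p - r)^2"
      using r2 by (simp add: power2_eq_square algebra_simps)
    then show ?thesis using \<open>s = r\<close> \<open>r > 0\<close> assms by simp
  next
    case 3
    then have "s = u" "p < u" using s assms by (auto simp: r_def)
    moreover have "u * u < K * E" using 3 r2 assms mult_strict_mono[of u r u r] by simp
    moreover have "p * u \<le> u * u" using \<open>p < u\<close> assms by simp
    ultimately show ?thesis by (simp add: mult_neg_neg)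
  qed
qed

lemma inverse_plus_linear_strict_argmin:
  fixes l u K E p s :: real
  assumes "0 < l" "l \<le> u" "0 \<le> K" "0 < E"
    and s: "s = min u (max l (sqrt (K * E)))"
    and "p \<in> {l..u}" "p \<noteq> s"
  shows "K / s + s / E < K / p + p / E"
proof -
  have "p > 0" "s > 0" using assms by auto
  then have "(K / p + p / E) - (K / s + s / E) = (p - s) * (p * s - K * E) / (p * s * E)"
    using \<open>E > 0\<close> by (simp add: field_simps)
  also have "\<dots> > 0"
    using clamped_sqrt_sign[OF assms] \<open>p > 0\<close> \<open>s > 0\<close> \<open>E > 0\<close> by simp
  finally show ?thesis by simp
qed

theorem theorem6:
  fixes U :: "'a set" and e1 e2 :: real and Fa Fb :: nat
  assumes "finite U" and "U \<noteq> {}"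
    and "0 < e1" and "e1 \<le> 1" and "0 < e2" and "e2 \<le> 1"
    and "1 \<le> Fa" and "1 \<le> Fb"
  defines "pstar \<equiv> min 1 (max (max e1 e2)
             (sqrt (e1 * e2 * (real Fa * real Fb - real Fa - real Fb + 1))))"
  shows "pstar \<in> {max e1 e2..1}
    \<and> (\<forall>p\<in>{max e1 e2..1}. worst_var U e1 e2 Fa Fb pstar \<le> worst_var U e1 e2 Fa Fb p)
    \<and> (\<forall>p\<in>{max e1 e2..1}. worst_var U e1 e2 Fa Fb p \<le> worst_var U e1 e2 Fa Fb pstar \<longrightarrow> p = pstar)"
proof -
  define K where "K = (real Fa - 1) * (real Fb - 1)"
  define E where "E = e1 * e2"
  define C where "C = real (card U) * Fa * Fb"
  define B where "B = real (card U) * Fa * Fb * (Fa / e2 + Fb / e1 - Fa * Fb - 1/e1 - 1/e2)"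
  have "C > 0" using assms by (simp add: C_def card_gt_0_iff)
  have pstar: "pstar = min 1 (max (max e1 e2) (sqrt (K * E)))"
    unfolding pstar_def K_def E_def by (simp add: algebra_simps)
  have range: "pstar \<in> {max e1 e2..1}" using pstar assms by auto
  have worst: "worst_var U e1 e2 Fa Fb p = C * (K / p + p / E) + B" if "p \<in> {max e1 e2..1}" for p
    using that assms worst_var_eq_join_var_const[of U e1 e2 p Fa Fb]
    by (simp add: join_var_const C_def B_def K_def E_def)
  have strict: "worst_var U e1 e2 Fa Fb pstar < worst_var U e1 e2 Fa Fb p"
    if "p \<in> {max e1 e2..1}" "p \<noteq> pstar" for p
    using inverse_plus_linear_strict_argmin[OF _ _ _ _ pstar that] assms \<open>C > 0\<close>
    unfolding worst[OF that(1)] worst[OF range] K_def E_def by simp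
  show ?thesis
    using range strict by (metis less_le_not_le nle_le)
qed

end
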